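(* Consider the two-signal setting in the context. Assume $f=f_xf_y$ with $f_x,f_y$ symmetric about $0$ (cdfs $F_x,F_y$), and let $\delta,\gamma,\xi>0$ satisfy $1-\delta\ge\gamma$, $1>3\delta+2\gamma$, $$\frac{F_x(\xi)}{1-F_x(\xi)}\cdot\frac{\sup_{a\in[0,\delta]}f_y(\eta-a)}{\inf_{a\in[1-\delta,1]}f_y(\eta-a)}\le\frac{1-c}{c}\ \text{ for all }\eta\ge1-\delta-\gamma,\qquad F_x(\xi)F_y(\gamma)\ge1-\delta.$$ Let $t\in\mathbb{R}$ and let $A:\mathbb{R}\to[0,1]$ be measurable with $A(\theta)\in[1-\delta,1]$ for $\theta<t$ and $A(\theta)\in[0,\delta]$ for $\theta\ge t$. Then: (1) if $y_i\ge1-\delta-\gamma$ and $x_i\le t+\xi$, then $P[\theta<t\mid A(\cdot),(x_i,y_i)]\ge c$; (2) if $y_i\le\delta+\gamma$ and $x_i\ge t-\xi$, then $P[\theta\ge t\mid A(\cdot),(x_i,y_i)]\ge c$; (3) for every $\theta<t$, $P[y_i\ge1-\delta-\gamma\text{ and }x_i\le t+\xi\mid A(\cdot),\theta]\ge1-\delta$; (4) for every $\theta\ge t$, $P[y_i\le\delta+\gamma\text{ and }x_i>t-\xi\mid A(\cdot),\theta]\ge1-\delta$.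
   Context: Agent $i$ observes $x_i=\theta+\epsilon^x_i$ and $y_i=A(\theta)+\epsilon^y_i$, where $\epsilon^x_i,\epsilon^y_i$ are independent with densities $f_x,f_y$; $c\in(0,1)$. Agents have an (improper) uniform prior on $\theta\in\mathbb{R}$, so the posterior given $(x,y)$ and the conjectured function $A(\cdot)$ is $P[\theta\in S\mid A(\cdot),(x,y)]=\int_S f_x(x-\theta)f_y(y-A(\theta))\,d\theta\big/\int_{\mathbb{R}} f_x(x-\theta)f_y(y-A(\theta))\,d\theta$ (the limit of posteriors under uniform priors on $[t-N,t+N]$). In (3) and (4), the probability is over the errors $(\epsilon^x_i,\epsilon^y_i)$ for the given fundamental $\theta$. *)

theory Defs
  imports "HOL-Probability.Probability"
begin

definition is_density :: "(real \<Rightarrow> real) \<Rightarrow> bool" where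
  "is_density f \<longleftrightarrow> f \<in> borel_measurable lborel \<and> (\<forall>u. 0 \<le> f u)
     \<and> (\<integral>\<^sup>+ u. ennreal (f u) \<partial>lborel) = 1"

text \<open>Unnormalised posterior mass of the set S under the improper uniform prior,
  given the conjectured function A and the signals (x,y).\<close>
definition post_mass ::
  "(real \<Rightarrow> real) \<Rightarrow> (real \<Rightarrow> real) \<Rightarrow> (real \<Rightarrow> real) \<Rightarrow> real \<Rightarrow> real \<Rightarrow> real set \<Rightarrow> ennreal" where
  "post_mass fx fy A x y S =
     (\<integral>\<^sup>+ \<theta>. ennreal (fx (x - \<theta>) * fy (y - A \<theta>)) * indicator S \<theta> \<partial>lborel)"

definition posterior ::
  "(real \<Rightarrow> real) \<Rightarrow> (real \<Rightarrow> real) \<Rightarrow> (real \<Rightarrow> real) \<Rightarrow> real \<Rightarrow> real \<Rightarrow> real set \<Rightarrow> ennreal" where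
  "posterior fx fy A x y S = post_mass fx fy A x y S / post_mass fx fy A x y UNIV"

definition err_law :: "(real \<Rightarrow> real) \<Rightarrow> (real \<Rightarrow> real) \<Rightarrow> (real \<times> real) measure" where
  "err_law fx fy = density lborel fx \<Otimes>\<^sub>M density lborel fy"

end

theory Submission
  imports Defs
begin

(* Left of the cutoff t the aggregate A lies in [1 - delta, 1], right of it in [0, delta]. Hence for a
  signal (x, y) with high y the y-likelihood fy (y - A theta) is at most sup {fy (y - a) | a in [0, delta]}
  on {theta >= t} and at least inf {fy (y - a) | a in [1 - delta, 1]} on {theta < t}, while, as x <= t + xi,
  the x-likelihood gives {theta >= t} mass at most Fx(xi) and {theta < t} mass at least 1 - Fx(xi). The
  ratio hypothesis thus bounds the posterior odds of {theta >= t} by (1 - c)/c. Signals with low y are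
  the mirror image: by symmetry of fy, fy (y - A theta) = fy ((1 - y) - (1 - A theta)).
  For the signal probabilities, the event contains the rectangle {eps_x <= xi} x {eps_y > -gamma} (or its
  mirror image), whose probability is Fx(xi) Fy(gamma) >= 1 - delta by independence and symmetry. *)

lemma real_distribution_density:
  assumes "is_density f"
  shows "real_distribution (density lborel f)"
proof -
  have "f \<in> borel_measurable lborel" using assms unfolding is_density_def by simp
  then have "prob_space (density lborel f)"
    using assms by (intro prob_spaceI) (simp add: emeasure_density is_density_def)
  then show ?thesis by (simp add: real_distribution_def real_distribution_axioms_def)
qed

lemma measure_density_singleton:
  assumes "is_density f"
  shows "measure (density lborel f) {a} = 0"
proof -
  have [measurable]: "f \<in> borel_measurable lborel" using assms unfolding is_density_def by simp
  have "emeasure (density lborel f) {a} = (\<integral>\<^sup>+ u. ennreal (f u) * indicator {a} u \<partial>lborel)"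
    by (simp add: emeasure_density)
  also have "\<dots> = 0"
    using AE_lborel_singleton[of a] by (subst nn_integral_0_iff_AE) (auto elim: eventually_mono)
  finally show ?thesis by (simp add: measure_def)
qed

lemma nn_integral_density_shift:
  fixes f :: "real \<Rightarrow> real"
  assumes "f \<in> borel_measurable borel" "S \<in> sets borel"
  shows "(\<integral>\<^sup>+ \<theta>. ennreal (f (x - \<theta>)) * indicator S \<theta> \<partial>lborel)
    = emeasure (density lborel f) ((\<lambda>u. x - u) -` S)"
proof -
  define T where "T = (\<lambda>u. x - u) -` S"
  have T: "T \<in> sets borel"
    unfolding T_def using measurable_sets[OF _ assms(2), of "\<lambda>u. x - u" borel] by simp
  then have "(\<lambda>u. ennreal (f u) * indicator T u) \<in> borel_measurable borel"
    using assms(1) by measurable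
  then have "(\<integral>\<^sup>+ u. ennreal (f u) * indicator T u \<partial>lborel)
      = ennreal \<bar>-1\<bar> * (\<integral>\<^sup>+ \<theta>. ennreal (f (x + -1 * \<theta>)) * indicator T (x + -1 * \<theta>) \<partial>lborel)"
    by (rule nn_integral_real_affine) simp
  then show ?thesis using assms(1) T by (simp add: T_def emeasure_density indicator_def)
qed

lemma emeasure_symmetric_density_uminus:
  fixes f :: "real \<Rightarrow> real"
  assumes "f \<in> borel_measurable borel" "\<And>u. f (- u) = f u" "S \<in> sets borel"
  shows "emeasure (density lborel f) (uminus -` S) = emeasure (density lborel f) S"
proof -
  have S': "uminus -` S \<in> sets borel"
    using measurable_sets[OF borel_measurable_uminus[OF measurable_ident] assms(3)] by simp
  then have "emeasure (density lborel f) (uminus -` S)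
      = (\<integral>\<^sup>+ \<theta>. ennreal (f (0 - \<theta>)) * indicator (uminus -` S) \<theta> \<partial>lborel)"
    using assms(1,2) by (simp add: emeasure_density)
  also have "\<dots> = emeasure (density lborel f) ((\<lambda>u. 0 - u) -` uminus -` S)"
    using assms(1) S' by (rule nn_integral_density_shift)
  finally show ?thesis by (simp add: vimage_def)
qed

lemma (in real_distribution) measure_greaterThan_eq_cdf:
  "measure M {a<..} = 1 - cdf M a"
proof -
  have "{a<..} = space M - {..a}" by auto
  then show ?thesis using prob_compl[of "{..a}"] by (auto simp: cdf_def)
qed

lemma
  assumes "is_density f" "\<And>u. f (- u) = f u"
  shows measure_symmetric_density_greaterThan_neg: "measure (density lborel f) {- a<..} = cdf (density lborel f) a"
    and measure_symmetric_density_atMost_neg: "measure (density lborel f) {..- a} = 1 - cdf (density lborel f) a"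
proof -
  define D where "D = density lborel f"
  interpret real_distribution D unfolding D_def using assms(1) by (rule real_distribution_density)
  have f: "f \<in> borel_measurable borel" using assms(1) unfolding is_density_def by simp
  have reflect: "measure D (uminus -` S) = measure D S" if "S \<in> sets borel" for S
    unfolding measure_def D_def using emeasure_symmetric_density_uminus[OF f assms(2) that] by simp
  have atom: "measure D {a} = 0" unfolding D_def using assms(1) by (rule measure_density_singleton)
  have "measure D {- a<..} = measure D (uminus -` {..<a})" by (intro arg_cong[where f = "measure D"]) auto
  also have "\<dots> = measure D {..<a} + measure D {a}" using atom by (simp add: reflect)
  also have "\<dots> = measure D ({..<a} \<union> {a})" by (rule finite_measure_Union[symmetric]) auto
  also have "{..<a} \<union> {a} = {..a}" by auto
  finally show "measure D {- a<..} = cdf D a" by (simp add: cdf_def)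
  have "measure D {..- a} = measure D (uminus -` {a..})" by (intro arg_cong[where f = "measure D"]) auto
  also have "\<dots> = measure D ({a<..} \<union> {a})" by (simp add: reflect ivl_disj_un_singleton(1)[symmetric])
  also have "\<dots> = measure D {a<..} + measure D {a}" by (rule finite_measure_Union) auto
  finally show "measure D {..- a} = 1 - cdf D a" using atom by (simp add: measure_greaterThan_eq_cdf)
qed

lemma measure_err_law_Times:
  assumes "is_density fy" "X \<in> sets borel" "Y \<in> sets borel"
  shows "measure (err_law fx fy) (X \<times> Y) = measure (density lborel fx) X * measure (density lborel fy) Y"
proof -
  interpret Y: real_distribution "density lborel fy" using assms(1) by (rule real_distribution_density)
  have "emeasure (err_law fx fy) (X \<times> Y) = emeasure (density lborel fx) X * emeasure (density lborel fy) Y"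
    unfolding err_law_def using assms(2,3) by (intro Y.emeasure_pair_measure_Times) simp_all
  then show ?thesis by (simp add: measure_def enn2real_mult)
qed

(* ereal division by 0 gives \<infinity> for a positive numerator, so for S > 0 the hypothesis forces
  F < 1, I > 0 and S < \<infinity>. *)
lemma ereal_odds_mult_ratio_le:
  fixes F r I :: real and S :: ereal
  assumes "0 < F" "F \<le> 1" "0 \<le> S" "0 \<le> I" "0 \<le> r"
    and le: "ereal F / ereal (1 - F) * (S / ereal I) \<le> ereal r"
  shows "S \<noteq> \<infinity>" and "F * real_of_ereal S \<le> r * (1 - F) * I"
proof -
  have odds_pos: "0 < ereal F / ereal (1 - F)"
    using assms(1,2) by (cases "F = 1") (auto simp: divide_ereal_def)
  have "S \<noteq> \<infinity> \<and> F * real_of_ereal S \<le> r * (1 - F) * I"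
  proof (cases "S = 0")
    case True
    then show ?thesis using assms by simp
  next
    case False
    then have ratio_pos: "0 < S / ereal I" using assms(3,4) by (cases S) (auto simp: divide_ereal_def)
    have "F < 1"
    proof (rule ccontr)
      assume "\<not> F < 1"
      then have "ereal F / ereal (1 - F) = \<infinity>" using assms(2) by (simp add: divide_ereal_def)
      then show False using le ratio_pos by (cases "S / ereal I") auto
    qed
    have "S / ereal I \<noteq> \<infinity>" using le odds_pos by (cases "ereal F / ereal (1 - F)") auto
    then have "S \<noteq> \<infinity>" "0 < I"
      using False assms(3,4) by (cases S; cases "I = 0"; auto simp: divide_ereal_def)+
    then obtain s where s: "S = ereal s" using assms(3) by (cases S) auto
    then have "F / (1 - F) * (s / I) \<le> r"
      using le \<open>F < 1\<close> \<open>0 < I\<close> by (simp add: divide_ereal_def divide_inverse)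
    then have "F * s \<le> r * (1 - F) * I"
      using \<open>F < 1\<close> \<open>0 < I\<close> by (simp add: field_simps)
    then show ?thesis using s by simp
  qed
  then show "S \<noteq> \<infinity>" "F * real_of_ereal S \<le> r * (1 - F) * I" by simp_all
qed

lemma ennreal_le_divide_of_odds:
  fixes a b :: ennreal and c :: real
  assumes "0 \<le> c" "c \<le> 1" "ennreal c * a \<le> ennreal (1 - c) * b" "a + b \<noteq> 0" "a + b \<noteq> \<top>"
  shows "ennreal c \<le> b / (a + b)"
proof -
  have "ennreal c * (a + b) \<le> ennreal (1 - c) * b + ennreal c * b"
    using assms(3) by (simp add: distrib_left)
  also have "\<dots> = b" using assms(1,2) by (simp add: distrib_right[symmetric] ennreal_plus[symmetric])
  finally have "ennreal c * (a + b) / (a + b) \<le> b / (a + b)" by (rule divide_right_mono_ennreal)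
  then show ?thesis using assms(4,5) by (simp add: ennreal_mult_divide_eq)
qed

lemma post_mass_le:
  assumes "is_density fx" "S \<in> sets borel" "\<And>\<theta>. \<theta> \<in> S \<Longrightarrow> fy (y - A \<theta>) \<le> B"
  shows "post_mass fx fy A x y S \<le> ennreal B * (\<integral>\<^sup>+ \<theta>. ennreal (fx (x - \<theta>)) * indicator S \<theta> \<partial>lborel)"
proof -
  have [measurable]: "fx \<in> borel_measurable borel" and fx_nonneg: "\<And>u. 0 \<le> fx u"
    using assms(1) unfolding is_density_def by simp_all
  note [measurable] = assms(2)
  have "post_mass fx fy A x y S \<le> (\<integral>\<^sup>+ \<theta>. ennreal B * (ennreal (fx (x - \<theta>)) * indicator S \<theta>) \<partial>lborel)"
    unfolding post_mass_def
  proof (intro nn_integral_mono)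
    fix \<theta>
    have "\<theta> \<in> S \<Longrightarrow> fx (x - \<theta>) * fy (y - A \<theta>) \<le> B * fx (x - \<theta>)"
      using mult_left_mono[OF assms(3) fx_nonneg] by (simp add: mult.commute)
    then show "ennreal (fx (x - \<theta>) * fy (y - A \<theta>)) * indicator S \<theta> \<le> ennreal B * (ennreal (fx (x - \<theta>)) * indicator S \<theta>)"
      using fx_nonneg by (auto simp: indicator_def ennreal_mult''[symmetric] intro: ennreal_leI)
  qed
  also have "\<dots> = ennreal B * (\<integral>\<^sup>+ \<theta>. ennreal (fx (x - \<theta>)) * indicator S \<theta> \<partial>lborel)"
    by (intro nn_integral_cmult) measurable
  finally show ?thesis .
qed

lemma post_mass_ge:
  assumes "is_density fx" "S \<in> sets borel" "\<And>\<theta>. \<theta> \<in> S \<Longrightarrow> I \<le> fy (y - A \<theta>)"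
  shows "ennreal I * (\<integral>\<^sup>+ \<theta>. ennreal (fx (x - \<theta>)) * indicator S \<theta> \<partial>lborel) \<le> post_mass fx fy A x y S"
proof -
  have [measurable]: "fx \<in> borel_measurable borel" and fx_nonneg: "\<And>u. 0 \<le> fx u"
    using assms(1) unfolding is_density_def by simp_all
  note [measurable] = assms(2)
  have "ennreal I * (\<integral>\<^sup>+ \<theta>. ennreal (fx (x - \<theta>)) * indicator S \<theta> \<partial>lborel)
      = (\<integral>\<^sup>+ \<theta>. ennreal I * (ennreal (fx (x - \<theta>)) * indicator S \<theta>) \<partial>lborel)"
    by (intro nn_integral_cmult[symmetric]) measurable
  also have "\<dots> \<le> post_mass fx fy A x y S"
    unfolding post_mass_def
  proof (intro nn_integral_mono)
    fix \<theta>
    have "\<theta> \<in> S \<Longrightarrow> I * fx (x - \<theta>) \<le> fx (x - \<theta>) * fy (y - A \<theta>)"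
      using mult_left_mono[OF assms(3) fx_nonneg] by (simp add: mult.commute)
    then show "ennreal I * (ennreal (fx (x - \<theta>)) * indicator S \<theta>) \<le> ennreal (fx (x - \<theta>) * fy (y - A \<theta>)) * indicator S \<theta>"
      using fx_nonneg by (auto simp: indicator_def ennreal_mult''[symmetric] intro: ennreal_leI)
  qed
  finally show ?thesis .
qed

lemma post_mass_add_compl:
  assumes "is_density fx" "is_density fy" "A \<in> borel_measurable borel" "S \<in> sets borel"
  shows "post_mass fx fy A x y (- S) + post_mass fx fy A x y S = post_mass fx fy A x y UNIV"
proof -
  have [measurable]: "fx \<in> borel_measurable borel" "fy \<in> borel_measurable borel" "A \<in> borel_measurable borel"
    "S \<in> sets borel"
    using assms unfolding is_density_def by simp_all
  show ?thesis
    unfolding post_mass_def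
    by (subst nn_integral_add[symmetric]) (auto intro!: nn_integral_cong simp: indicator_def)
qed

lemma posterior_ge_of_likelihood_bounds:
  fixes c B I p q :: real
  assumes dens: "is_density fx" "is_density fy" and A: "A \<in> borel_measurable borel"
    and Q: "Q \<in> sets borel" and c: "0 \<le> c" "c \<le> 1" and pq: "0 \<le> p" "0 \<le> q"
    and fy_upper: "\<And>\<theta>. \<theta> \<notin> Q \<Longrightarrow> fy (y - A \<theta>) \<le> B"
    and fy_lower: "\<And>\<theta>. \<theta> \<in> Q \<Longrightarrow> I \<le> fy (y - A \<theta>)"
    and fx_upper: "(\<integral>\<^sup>+ \<theta>. ennreal (fx (x - \<theta>)) * indicator (- Q) \<theta> \<partial>lborel) \<le> ennreal p"
    and fx_lower: "ennreal q \<le> (\<integral>\<^sup>+ \<theta>. ennreal (fx (x - \<theta>)) * indicator Q \<theta> \<partial>lborel)"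
    and odds: "c * p * B \<le> (1 - c) * q * I"
    and total: "0 < post_mass fx fy A x y UNIV" "post_mass fx fy A x y UNIV < \<infinity>"
  shows "ennreal c \<le> posterior fx fy A x y Q"
proof -
  let ?M = "post_mass fx fy A x y"
  have "?M (- Q) \<le> ennreal B * (\<integral>\<^sup>+ \<theta>. ennreal (fx (x - \<theta>)) * indicator (- Q) \<theta> \<partial>lborel)"
    using dens(1) Q fy_upper by (intro post_mass_le) auto
  also have "\<dots> \<le> ennreal B * ennreal p" using fx_upper by (rule mult_left_mono) simp
  finally have upper: "?M (- Q) \<le> ennreal B * ennreal p" .
  have "ennreal I * ennreal q \<le> ennreal I * (\<integral>\<^sup>+ \<theta>. ennreal (fx (x - \<theta>)) * indicator Q \<theta> \<partial>lborel)"
    using fx_lower by (rule mult_left_mono) simp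
  also have "\<dots> \<le> ?M Q" using dens(1) Q fy_lower by (rule post_mass_ge)
  finally have lower: "ennreal I * ennreal q \<le> ?M Q" .
  have "ennreal c * ?M (- Q) \<le> ennreal c * (ennreal B * ennreal p)" using upper by (rule mult_left_mono) simp
  also have "\<dots> = ennreal (c * p * B)" using c pq by (simp add: ennreal_mult' ennreal_mult'' mult_ac)
  also have "\<dots> \<le> ennreal ((1 - c) * q * I)" using odds by (rule ennreal_leI)
  also have "\<dots> = ennreal (1 - c) * (ennreal I * ennreal q)"
    using c pq by (simp add: ennreal_mult' ennreal_mult'' mult_ac)
  also have "\<dots> \<le> ennreal (1 - c) * ?M Q" using lower by (rule mult_left_mono) simp
  finally have odds_M: "ennreal c * ?M (- Q) \<le> ennreal (1 - c) * ?M Q" .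
  have split: "?M (- Q) + ?M Q = ?M UNIV" using dens A Q by (rule post_mass_add_compl)
  show ?thesis
    unfolding posterior_def using ennreal_le_divide_of_odds[OF c odds_M, unfolded split] total by simp
qed

locale two_signal_cutoff =
  fixes fx fy A :: "real \<Rightarrow> real" and c \<delta> \<gamma> \<xi> t :: real
  assumes c: "0 < c" "c < 1"
    and dens: "is_density fx" "is_density fy"
    and sym: "\<And>u. fx (- u) = fx u" "\<And>u. fy (- u) = fy u"
    and \<delta>: "0 < \<delta>" "\<delta> < 1"
    and ratio: "\<And>\<eta>. \<eta> \<ge> 1 - \<delta> - \<gamma> \<Longrightarrow>
       ereal (cdf (density lborel fx) \<xi>) / ereal (1 - cdf (density lborel fx) \<xi>)
       * ((SUP a\<in>{0..\<delta>}. ereal (fy (\<eta> - a))) / (INF a\<in>{1 - \<delta>..1}. ereal (fy (\<eta> - a))))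
       \<le> ereal ((1 - c) / c)"
    and mass: "cdf (density lborel fx) \<xi> * cdf (density lborel fy) \<gamma> \<ge> 1 - \<delta>"
    and Ameas: "A \<in> borel_measurable lborel"
    and Alow: "\<And>\<theta>. \<theta> < t \<Longrightarrow> A \<theta> \<in> {1 - \<delta>..1}"
    and Ahigh: "\<And>\<theta>. \<theta> \<ge> t \<Longrightarrow> A \<theta> \<in> {0..\<delta>}"
begin

sublocale X: real_distribution "density lborel fx" using dens(1) by (rule real_distribution_density)
sublocale Y: real_distribution "density lborel fy" using dens(2) by (rule real_distribution_density)

lemma cdf_pos: "0 < cdf (density lborel fx) \<xi>"
proof -
  have "0 < cdf (density lborel fx) \<xi> * cdf (density lborel fy) \<gamma>" using mass \<delta> by linarith
  then show ?thesis using X.cdf_nonneg[of \<xi>] by (auto simp: zero_less_mult_iff)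
qed

lemma likelihood_ratio_bound:
  assumes "1 - \<delta> - \<gamma> \<le> \<eta>"
  obtains B I where "\<And>a. a \<in> {0..\<delta>} \<Longrightarrow> fy (\<eta> - a) \<le> B"
    and "\<And>a. a \<in> {1 - \<delta>..1} \<Longrightarrow> I \<le> fy (\<eta> - a)"
    and "c * cdf (density lborel fx) \<xi> * B \<le> (1 - c) * (1 - cdf (density lborel fx) \<xi>) * I"
proof -
  define F where "F = cdf (density lborel fx) \<xi>"
  define S where "S = (SUP a\<in>{0..\<delta>}. ereal (fy (\<eta> - a)))"
  define J where "J = (INF a\<in>{1 - \<delta>..1}. ereal (fy (\<eta> - a)))"
  have fy_nonneg: "\<And>u. 0 \<le> fy u" using dens(2) unfolding is_density_def by simp
  have S_upper: "ereal (fy (\<eta> - a)) \<le> S" if "a \<in> {0..\<delta>}" for a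
    unfolding S_def using that by (rule SUP_upper)
  have J_lower: "J \<le> ereal (fy (\<eta> - a))" if "a \<in> {1 - \<delta>..1}" for a
    unfolding J_def using that by (rule INF_lower)
  have "0 \<le> S" using order_trans[OF _ S_upper[of 0]] fy_nonneg[of \<eta>] \<delta>(1) by simp
  have "0 \<le> J" unfolding J_def using fy_nonneg by (simp add: INF_greatest)
  moreover have "J \<le> ereal (fy (\<eta> - 1))" using J_lower \<delta>(1) by simp
  ultimately have J: "J = ereal (real_of_ereal J)" "0 \<le> real_of_ereal J" by (cases J; simp)+
  have "ereal F / ereal (1 - F) * (S / ereal (real_of_ereal J)) \<le> ereal ((1 - c) / c)"
    using ratio[OF assms] J(1) unfolding F_def S_def J_def by simp
  moreover have "0 < F" "F \<le> 1" "0 \<le> (1 - c) / c"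
    using cdf_pos X.cdf_bounded_prob c unfolding F_def by simp_all
  ultimately have "S \<noteq> \<infinity>" and odds: "F * real_of_ereal S \<le> (1 - c) / c * (1 - F) * real_of_ereal J"
    using ereal_odds_mult_ratio_le \<open>0 \<le> S\<close> J(2) by blast+
  show ?thesis
  proof
    show "fy (\<eta> - a) \<le> real_of_ereal S" if "a \<in> {0..\<delta>}" for a
      using S_upper[OF that] \<open>S \<noteq> \<infinity>\<close> \<open>0 \<le> S\<close> by (cases S) auto
    show "real_of_ereal J \<le> fy (\<eta> - a)" if "a \<in> {1 - \<delta>..1}" for a
      using J_lower[OF that] J(1) by (metis ereal_less_eq(3))
    have "c * (F * real_of_ereal S) \<le> c * ((1 - c) / c * (1 - F) * real_of_ereal J)"
      using odds c by (intro mult_left_mono) simp_all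
    also have "\<dots> = (1 - c) * (1 - F) * real_of_ereal J" using c by simp
    finally show "c * cdf (density lborel fx) \<xi> * real_of_ereal S
        \<le> (1 - c) * (1 - cdf (density lborel fx) \<xi>) * real_of_ereal J"
      unfolding F_def by (simp add: mult.assoc)
  qed
qed

lemma posterior_below_cutoff:
  assumes "1 - \<delta> - \<gamma> \<le> y" "x \<le> t + \<xi>"
    and "0 < post_mass fx fy A x y UNIV" "post_mass fx fy A x y UNIV < \<infinity>"
  shows "ennreal c \<le> posterior fx fy A x y {\<theta>. \<theta> < t}"
proof -
  define F where "F = cdf (density lborel fx) \<xi>"
  have [measurable]: "fx \<in> borel_measurable borel" using dens(1) unfolding is_density_def by simp
  obtain B I where B: "\<And>a. a \<in> {0..\<delta>} \<Longrightarrow> fy (y - a) \<le> B"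
    and I: "\<And>a. a \<in> {1 - \<delta>..1} \<Longrightarrow> I \<le> fy (y - a)"
    and odds: "c * F * B \<le> (1 - c) * (1 - F) * I"
    using likelihood_ratio_bound[OF assms(1)] unfolding F_def by blast
  have fy_upper: "fy (y - A \<theta>) \<le> B" if "t \<le> \<theta>" for \<theta>
    using B Ahigh[OF that] by simp
  have fy_lower: "I \<le> fy (y - A \<theta>)" if "\<theta> < t" for \<theta>
    using I Alow[OF that] by simp
  show ?thesis
  proof (rule posterior_ge_of_likelihood_bounds[where B = B and I = I and p = F and q = "1 - F"])
    have "(\<integral>\<^sup>+ \<theta>. ennreal (fx (x - \<theta>)) * indicator (- {\<theta>. \<theta> < t}) \<theta> \<partial>lborel)
        = emeasure (density lborel fx) {..x - t}"
      by (subst nn_integral_density_shift) (auto intro!: arg_cong[where f = "emeasure _"])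
    also have "\<dots> \<le> emeasure (density lborel fx) {..\<xi>}" using assms(2) by (intro emeasure_mono) auto
    also have "\<dots> = ennreal F" unfolding F_def by (simp add: X.emeasure_eq_measure cdf_def)
    finally show "(\<integral>\<^sup>+ \<theta>. ennreal (fx (x - \<theta>)) * indicator (- {\<theta>. \<theta> < t}) \<theta> \<partial>lborel) \<le> ennreal F" .
    have "ennreal (1 - F) = emeasure (density lborel fx) {\<xi><..}"
      unfolding F_def by (simp add: X.emeasure_eq_measure X.measure_greaterThan_eq_cdf)
    also have "\<dots> \<le> emeasure (density lborel fx) {x - t<..}" using assms(2) by (intro emeasure_mono) auto
    also have "\<dots> = (\<integral>\<^sup>+ \<theta>. ennreal (fx (x - \<theta>)) * indicator {\<theta>. \<theta> < t} \<theta> \<partial>lborel)"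
      by (subst nn_integral_density_shift) (auto intro!: arg_cong[where f = "emeasure _"])
    finally show "ennreal (1 - F) \<le> (\<integral>\<^sup>+ \<theta>. ennreal (fx (x - \<theta>)) * indicator {\<theta>. \<theta> < t} \<theta> \<partial>lborel)" .
  qed (use dens Ameas c odds assms(3,4) X.cdf_nonneg X.cdf_bounded_prob fy_upper fy_lower in \<open>auto simp: F_def\<close>)
qed

lemma posterior_above_cutoff:
  assumes "y \<le> \<delta> + \<gamma>" "t - \<xi> \<le> x"
    and "0 < post_mass fx fy A x y UNIV" "post_mass fx fy A x y UNIV < \<infinity>"
  shows "ennreal c \<le> posterior fx fy A x y {\<theta>. \<theta> \<ge> t}"
proof -
  define F where "F = cdf (density lborel fx) \<xi>"
  have [measurable]: "fx \<in> borel_measurable borel" using dens(1) unfolding is_density_def by simp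
  have "1 - \<delta> - \<gamma> \<le> 1 - y" using assms(1) by simp
  then obtain B I where B: "\<And>a. a \<in> {0..\<delta>} \<Longrightarrow> fy (1 - y - a) \<le> B"
    and I: "\<And>a. a \<in> {1 - \<delta>..1} \<Longrightarrow> I \<le> fy (1 - y - a)"
    and odds: "c * F * B \<le> (1 - c) * (1 - F) * I"
    using likelihood_ratio_bound unfolding F_def by blast
  have fy_flip: "fy (y - A \<theta>) = fy (1 - y - (1 - A \<theta>))" for \<theta>
    using sym(2)[of "y - A \<theta>"] by simp
  have fy_upper: "fy (y - A \<theta>) \<le> B" if "\<theta> < t" for \<theta>
    using B[of "1 - A \<theta>"] Alow[OF that] unfolding fy_flip by simp
  have fy_lower: "I \<le> fy (y - A \<theta>)" if "t \<le> \<theta>" for \<theta>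
    using I[of "1 - A \<theta>"] Ahigh[OF that] unfolding fy_flip by simp
  show ?thesis
  proof (rule posterior_ge_of_likelihood_bounds[where B = B and I = I and p = F and q = "1 - F"])
    have "(\<integral>\<^sup>+ \<theta>. ennreal (fx (x - \<theta>)) * indicator (- {\<theta>. \<theta> \<ge> t}) \<theta> \<partial>lborel)
        = emeasure (density lborel fx) {x - t<..}"
      by (subst nn_integral_density_shift) (auto intro!: arg_cong[where f = "emeasure _"])
    also have "\<dots> \<le> emeasure (density lborel fx) {- \<xi><..}" using assms(2) by (intro emeasure_mono) auto
    also have "\<dots> = ennreal F"
      unfolding F_def using dens(1) sym(1) by (simp add: X.emeasure_eq_measure measure_symmetric_density_greaterThan_neg)
    finally show "(\<integral>\<^sup>+ \<theta>. ennreal (fx (x - \<theta>)) * indicator (- {\<theta>. \<theta> \<ge> t}) \<theta> \<partial>lborel) \<le> ennreal F" .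
    have "ennreal (1 - F) = emeasure (density lborel fx) {..- \<xi>}"
      unfolding F_def using dens(1) sym(1) by (simp add: X.emeasure_eq_measure measure_symmetric_density_atMost_neg)
    also have "\<dots> \<le> emeasure (density lborel fx) {..x - t}" using assms(2) by (intro emeasure_mono) auto
    also have "\<dots> = (\<integral>\<^sup>+ \<theta>. ennreal (fx (x - \<theta>)) * indicator {\<theta>. \<theta> \<ge> t} \<theta> \<partial>lborel)"
      by (subst nn_integral_density_shift) (auto intro!: arg_cong[where f = "emeasure _"])
    finally show "ennreal (1 - F) \<le> (\<integral>\<^sup>+ \<theta>. ennreal (fx (x - \<theta>)) * indicator {\<theta>. \<theta> \<ge> t} \<theta> \<partial>lborel)" .
  qed (use dens Ameas c odds assms(3,4) X.cdf_nonneg X.cdf_bounded_prob fy_upper fy_lower in \<open>auto simp: F_def\<close>)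
qed

lemma signal_prob_below_cutoff:
  assumes "\<theta> < t"
  shows "1 - \<delta> \<le> measure (err_law fx fy) {(ex, ey). A \<theta> + ey \<ge> 1 - \<delta> - \<gamma> \<and> \<theta> + ex \<le> t + \<xi>}"
proof -
  have A: "A \<theta> \<in> {1 - \<delta>..1}" using Alow[OF assms] .
  have "{(ex, ey). A \<theta> + ey \<ge> 1 - \<delta> - \<gamma> \<and> \<theta> + ex \<le> t + \<xi>} = {..t + \<xi> - \<theta>} \<times> {1 - \<delta> - \<gamma> - A \<theta>..}"
    by auto
  then have "measure (err_law fx fy) {(ex, ey). A \<theta> + ey \<ge> 1 - \<delta> - \<gamma> \<and> \<theta> + ex \<le> t + \<xi>}
      = measure (density lborel fx) {..t + \<xi> - \<theta>} * measure (density lborel fy) {1 - \<delta> - \<gamma> - A \<theta>..}"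
    using dens(2) by (simp add: measure_err_law_Times)
  also have "\<dots> \<ge> measure (density lborel fx) {..\<xi>} * measure (density lborel fy) {- \<gamma><..}"
    using assms A by (intro mult_mono X.finite_measure_mono Y.finite_measure_mono) auto
  also have "measure (density lborel fx) {..\<xi>} * measure (density lborel fy) {- \<gamma><..}
      = cdf (density lborel fx) \<xi> * cdf (density lborel fy) \<gamma>"
    using dens(2) sym(2) by (simp add: cdf_def measure_symmetric_density_greaterThan_neg)
  finally show ?thesis using mass by linarith
qed

lemma signal_prob_above_cutoff:
  assumes "\<theta> \<ge> t"
  shows "1 - \<delta> \<le> measure (err_law fx fy) {(ex, ey). A \<theta> + ey \<le> \<delta> + \<gamma> \<and> \<theta> + ex > t - \<xi>}"
proof -
  have A: "A \<theta> \<in> {0..\<delta>}" using Ahigh[OF assms] .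
  have "{(ex, ey). A \<theta> + ey \<le> \<delta> + \<gamma> \<and> \<theta> + ex > t - \<xi>} = {t - \<xi> - \<theta><..} \<times> {..\<delta> + \<gamma> - A \<theta>}"
    by auto
  then have "measure (err_law fx fy) {(ex, ey). A \<theta> + ey \<le> \<delta> + \<gamma> \<and> \<theta> + ex > t - \<xi>}
      = measure (density lborel fx) {t - \<xi> - \<theta><..} * measure (density lborel fy) {..\<delta> + \<gamma> - A \<theta>}"
    using dens(2) by (simp add: measure_err_law_Times)
  also have "\<dots> \<ge> measure (density lborel fx) {- \<xi><..} * measure (density lborel fy) {..\<gamma>}"
    using assms A by (intro mult_mono X.finite_measure_mono Y.finite_measure_mono) auto
  also have "measure (density lborel fx) {- \<xi><..} * measure (density lborel fy) {..\<gamma>}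
      = cdf (density lborel fx) \<xi> * cdf (density lborel fy) \<gamma>"
    using dens(1) sym(1) by (simp add: cdf_def measure_symmetric_density_greaterThan_neg)
  finally show ?thesis using mass by linarith
qed

end

theorem lemma2:
  fixes fx fy A :: "real \<Rightarrow> real" and c \<delta> \<gamma> \<xi> t :: real
  assumes c: "0 < c" "c < 1"
    and dens: "is_density fx" "is_density fy"
    and sym: "\<And>u. fx (- u) = fx u" "\<And>u. fy (- u) = fy u"
    and par: "0 < \<delta>" "0 < \<gamma>" "0 < \<xi>" "1 - \<delta> \<ge> \<gamma>" "1 > 3 * \<delta> + 2 * \<gamma>"
    and ratio: "\<And>\<eta>. \<eta> \<ge> 1 - \<delta> - \<gamma> \<Longrightarrow>
       ereal (cdf (density lborel fx) \<xi>) / ereal (1 - cdf (density lborel fx) \<xi>)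
       * ((SUP a\<in>{0..\<delta>}. ereal (fy (\<eta> - a))) / (INF a\<in>{1 - \<delta>..1}. ereal (fy (\<eta> - a))))
       \<le> ereal ((1 - c) / c)"
    and mass: "cdf (density lborel fx) \<xi> * cdf (density lborel fy) \<gamma> \<ge> 1 - \<delta>"
    and Ameas: "A \<in> borel_measurable lborel"
    and Arange: "\<And>\<theta>. A \<theta> \<in> {0..1}"
    and Alow: "\<And>\<theta>. \<theta> < t \<Longrightarrow> A \<theta> \<in> {1 - \<delta>..1}"
    and Ahigh: "\<And>\<theta>. \<theta> \<ge> t \<Longrightarrow> A \<theta> \<in> {0..\<delta>}"
  shows
    "(\<forall>x y. y \<ge> 1 - \<delta> - \<gamma> \<and> x \<le> t + \<xi>
        \<and> 0 < post_mass fx fy A x y UNIV \<and> post_mass fx fy A x y UNIV < \<infinity>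
        \<longrightarrow> ennreal c \<le> posterior fx fy A x y {\<theta>. \<theta> < t})
   \<and> (\<forall>x y. y \<le> \<delta> + \<gamma> \<and> x \<ge> t - \<xi>
        \<and> 0 < post_mass fx fy A x y UNIV \<and> post_mass fx fy A x y UNIV < \<infinity>
        \<longrightarrow> ennreal c \<le> posterior fx fy A x y {\<theta>. \<theta> \<ge> t})
   \<and> (\<forall>\<theta>. \<theta> < t \<longrightarrow>
        measure (err_law fx fy) {(ex, ey). A \<theta> + ey \<ge> 1 - \<delta> - \<gamma> \<and> \<theta> + ex \<le> t + \<xi>} \<ge> 1 - \<delta>)
   \<and> (\<forall>\<theta>. \<theta> \<ge> t \<longrightarrow>
        measure (err_law fx fy) {(ex, ey). A \<theta> + ey \<le> \<delta> + \<gamma> \<and> \<theta> + ex > t - \<xi>} \<ge> 1 - \<delta>)"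
proof -
  have "\<delta> < 1" using par by linarith
  then interpret two_signal_cutoff fx fy A c \<delta> \<gamma> \<xi> t
    using assms by unfold_locales
  show ?thesis
    using posterior_below_cutoff posterior_above_cutoff signal_prob_below_cutoff signal_prob_above_cutoff
    by blast
qed

end
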